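(* Let $A\subset\mathbb R$ be an open interval of length strictly larger than $2$ and let $\psi:A\to\mathbb C$ be a regular $\mathbb C$-supershift on $A$. Then $a\in A\mapsto a\,\psi(a)$ is a regular $\mathbb C$-supershift on $A$; consequently, for every polynomial $p$ with complex coefficients, $a\in A\mapsto p(a)\,\psi(a)$ is a regular $\mathbb C$-supershift on $A$.
   Context: For an open interval $A\subset\mathbb R$ of length $R>2$ (possibly infinite), set $\mathbb A=\{(a,a')\in\mathbb R\times A:\ a'+[-1,1]\subset A,\ a+a'\in A\}$. For a sequence $\boldsymbol\epsilon=(\epsilon_N)_{N\ge1}$ with $\epsilon_N\in[0,1)$ and $\epsilon_N\to0$, put $h^{\boldsymbol\epsilon}_{N,\nu}=1-2\,\frac{\nu+\epsilon_N(N-\nu)}{N}$ for $0\le\nu\le N$. For a continuous $\psi:A\to\mathbb C$ and $(a,a')\in\mathbb A$ set $$S_N^{\boldsymbol\epsilon}[\psi](a,a')=\sum_{\nu=0}^N\binom N\nu\Big(\frac{1+a}2\Big)^{N-\nu}\Big(\frac{1-a}2\Big)^{\nu}\psi\big(a'+h^{\boldsymbol\epsilon}_{N,\nu}\big).$$ A continuous $\psi:A\to\mathbb C$ is called a regular $\mathbb C$-supershift on $A$ if (1) for every such sequence $\boldsymbol\epsilon$, $S_N^{\boldsymbol\epsilon}[\psi](a,a')\to\psi(a+a')$ as $N\to\infty$ uniformly on compact subsets of $\mathbb A$; and (2) for every family $\{\boldsymbol\epsilon_{\iota'}=(\epsilon_{\iota',N})_{N\ge1}:\iota'\in I'\}$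 of such sequences with $\sup_{\iota'\in I'}\epsilon_{\iota',N}\to0$ as $N\to\infty$, the convergence in (1) is uniform with respect to $\iota'\in I'$ on each compact subset of $\mathbb A$. *)

theory Defs
  imports "HOL-Analysis.Analysis" "HOL-Computational_Algebra.Polynomial"
begin

definition AA :: "real set \<Rightarrow> (real \<times> real) set" where
  "AA A = {(a, a'). a' \<in> A \<and> {a' - 1 .. a' + 1} \<subseteq> A \<and> a + a' \<in> A}"

definition adm_seq :: "(nat \<Rightarrow> real) \<Rightarrow> bool" where
  "adm_seq eps \<longleftrightarrow> (\<forall>N. 0 \<le> eps N \<and> eps N < 1) \<and> eps \<longlonglongrightarrow> 0"

definition hN :: "(nat \<Rightarrow> real) \<Rightarrow> nat \<Rightarrow> nat \<Rightarrow> real" where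
  "hN eps N \<nu> = 1 - 2 * ((real \<nu> + eps N * (real N - real \<nu>)) / real N)"

definition SN :: "(nat \<Rightarrow> real) \<Rightarrow> (real \<Rightarrow> complex) \<Rightarrow> nat \<Rightarrow> real \<times> real \<Rightarrow> complex" where
  "SN eps psi N p = (\<Sum>\<nu>=0..N. complex_of_real (real (N choose \<nu>)
       * ((1 + fst p) / 2) ^ (N - \<nu>) * ((1 - fst p) / 2) ^ \<nu>)
       * psi (snd p + hN eps N \<nu>))"

text \<open>Regular C-supershift on A (condition (1) and (2) of the paper;
  a family of sequences is represented as a set of sequences).\<close>
definition regular_supershift :: "real set \<Rightarrow> (real \<Rightarrow> complex) \<Rightarrow> bool" where
  "regular_supershift A psi \<longleftrightarrow>
     continuous_on A psi \<and>
     (\<forall>eps. adm_seq eps \<longrightarrow>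
        (\<forall>K. compact K \<and> K \<subseteq> AA A \<longrightarrow>
           uniform_limit K (SN eps psi) (\<lambda>p. psi (fst p + snd p)) sequentially)) \<and>
     (\<forall>F. (\<forall>eps\<in>F. adm_seq eps) \<and>
          (\<forall>e>0. \<exists>N0. \<forall>N\<ge>N0. \<forall>eps\<in>F. eps N < e) \<longrightarrow>
        (\<forall>K. compact K \<and> K \<subseteq> AA A \<longrightarrow>
           (\<forall>e>0. \<exists>N0. \<forall>N\<ge>N0. \<forall>eps\<in>F. \<forall>p\<in>K.
               norm (SN eps psi N p - psi (fst p + snd p)) < e)))"

end

theory Submission
  imports Defs
begin

text \<open>Multiplying \<psi> by the identity multiplies the \<nu>-th summand of S_N[\<psi>](a,a') by
  a' + h_{N,\<nu>}, which is affine in \<nu>. By \<nu> (N choose \<nu>) = N (N-1 choose \<nu>-1), the part linear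
  in \<nu> equals (1-a)/2 times S_{N-1}[\<psi>](a,a') taken with the perturbation
  \<epsilon>'_{N-1} = (1 + (N-1) \<epsilon>_N) / N, which is again admissible, uniformly over admissible
  families. Hence S_N[x \<psi>] = (a'+1-2\<epsilon>_N) S_N[\<psi>] - (1-a)(1-\<epsilon>_N) S_{N-1}[\<psi>] tends
  uniformly to (a'+1) \<psi>(a+a') - (1-a) \<psi>(a+a') = (a+a') \<psi>(a+a'). Supershifts form a
  complex vector space, so the polynomial case follows by Horner's scheme.\<close>

lemma uniform_limit_sequentially_Suc_iff:
  "uniform_limit S (\<lambda>n. f (Suc n)) l sequentially \<longleftrightarrow> uniform_limit S f l sequentially"
  unfolding uniform_limit_iff
  using eventually_sequentially_Suc[where P = "\<lambda>n. \<forall>x\<in>S. dist (f n x) (l x) < e" for e] by simp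

lemma uniform_limit_sequence_const:
  "(c \<longlongrightarrow> l) F \<Longrightarrow> uniform_limit S (\<lambda>n _. c n) (\<lambda>_. l) F"
  by (rule uniform_limitI) (auto dest: tendstoD)

lemma bounded_image_snd:
  assumes "compact K" "continuous_on K f"
  shows "bounded ((\<lambda>q. f (snd q)) ` (F \<times> K))"
proof -
  have "bounded (f ` K)" using assms by (intro compact_imp_bounded compact_continuous_image)
  then show ?thesis by (rule bounded_subset) auto
qed

definition bernstein_weight :: "real \<Rightarrow> nat \<Rightarrow> nat \<Rightarrow> real" where
  "bernstein_weight a N \<nu> = real (N choose \<nu>) * ((1 + a) / 2) ^ (N - \<nu>) * ((1 - a) / 2) ^ \<nu>"

lemma SN_eq_bernstein_sum:
  "SN eps psi N p
   = (\<Sum>\<nu>=0..N. of_real (bernstein_weight (fst p) N \<nu>) * psi (snd p + hN eps N \<nu>))"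
  by (simp add: SN_def bernstein_weight_def)

lemma bernstein_weight_Suc_Suc:
  "real (Suc \<nu>) * bernstein_weight a (Suc N) (Suc \<nu>)
   = real (Suc N) * ((1 - a) / 2) * bernstein_weight a N \<nu>"
proof -
  have binom: "real (Suc \<nu>) * real (Suc N choose Suc \<nu>) = real (Suc N) * real (N choose \<nu>)"
    by (metis Suc_times_binomial of_nat_mult)
  show ?thesis
    unfolding bernstein_weight_def diff_Suc_Suc power_Suc mult.assoc[symmetric] binom
    by (simp only: ac_simps)
qed

text \<open>The perturbation under which S_M reappears inside S_{M+1} (see \<open>hN_Suc_Suc\<close>). At
  M = 0 the formula would give 1; the value 0 keeps the sequence in [0,1).\<close>

definition eps_shift :: "(nat \<Rightarrow> real) \<Rightarrow> nat \<Rightarrow> real" where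
  "eps_shift eps M = (if M = 0 then 0 else (1 + real M * eps (Suc M)) / real (Suc M))"

lemma hN_Suc_Suc:
  assumes "M \<noteq> 0"
  shows "hN eps (Suc M) (Suc \<mu>) = hN (eps_shift eps) M \<mu>"
proof -
  define m x e where "m = real M" and "x = real \<mu>" and "e = eps (Suc M)"
  have "m > 0" "m + 1 \<noteq> 0" using assms by (simp_all add: m_def)
  then have "x + (1 + m * e) / (m + 1) * (m - x) = m * (x + 1 + e * (m - x)) / (m + 1)"
    by (simp add: field_simps)
  with \<open>m > 0\<close>
  have "(x + (1 + m * e) / (m + 1) * (m - x)) / m = (x + 1 + e * (m + 1 - (x + 1))) / (m + 1)"
    by simp
  then show ?thesis by (simp add: hN_def eps_shift_def assms m_def x_def e_def add.commute)
qed

lemma hN_affine: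
  "N \<noteq> 0 \<Longrightarrow> hN eps N \<nu> = 1 - 2 * eps N - 2 * (1 - eps N) * (real \<nu> / real N)"
  by (simp add: hN_def field_simps)

lemma SN_first_moment:
  assumes "M \<noteq> 0"
  shows "(\<Sum>\<nu>=0..Suc M. of_real (real \<nu> / real (Suc M) * bernstein_weight (fst p) (Suc M) \<nu>)
            * psi (snd p + hN eps (Suc M) \<nu>))
         = of_real ((1 - fst p) / 2) * SN (eps_shift eps) psi M p"
proof -
  define g where "g \<nu> = of_real (real \<nu> / real (Suc M) * bernstein_weight (fst p) (Suc M) \<nu>)
                         * psi (snd p + hN eps (Suc M) \<nu>)" for \<nu>
  have "real (Suc \<mu>) / real (Suc M) * bernstein_weight (fst p) (Suc M) (Suc \<mu>)
        = (1 - fst p) / 2 * bernstein_weight (fst p) M \<mu>" for \<mu>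
    using bernstein_weight_Suc_Suc[of \<mu> "fst p" M] by (simp add: field_simps del: of_nat_Suc)
  then have g_Suc: "g (Suc \<mu>) = of_real ((1 - fst p) / 2)
               * (of_real (bernstein_weight (fst p) M \<mu>) * psi (snd p + hN (eps_shift eps) M \<mu>))" for \<mu>
    by (simp only: g_def hN_Suc_Suc[OF assms] of_real_mult mult.assoc)
  have g_0: "g 0 = 0" by (simp add: g_def)
  show ?thesis
    unfolding g_def[symmetric] sum.atLeast0_atMost_Suc_shift comp_def g_Suc g_0 add_0_left
      SN_eq_bernstein_sum sum_distrib_left ..
qed

lemma SN_times_of_real:
  assumes "M \<noteq> 0"
  shows "SN eps (\<lambda>x. of_real x * psi x) (Suc M) p
         = of_real (snd p + 1 - 2 * eps (Suc M)) * SN eps psi (Suc M) p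
           - of_real ((1 - fst p) * (1 - eps (Suc M))) * SN (eps_shift eps) psi M p"
proof -
  define c d where "c = snd p + 1 - 2 * eps (Suc M)" and "d = 2 * (1 - eps (Suc M))"
  define w where "w = bernstein_weight (fst p) (Suc M)"
  have summand:
    "of_real (w \<nu>) * (of_real (snd p + hN eps (Suc M) \<nu>) * psi (snd p + hN eps (Suc M) \<nu>))
     = of_real c * (of_real (w \<nu>) * psi (snd p + hN eps (Suc M) \<nu>))
       - of_real d * (of_real (real \<nu> / real (Suc M) * w \<nu>) * psi (snd p + hN eps (Suc M) \<nu>))"
    for \<nu>
  proof -
    have affine: "snd p + hN eps (Suc M) \<nu> = c - d * (real \<nu> / real (Suc M))"
      by (simp add: hN_affine c_def d_def)
    have "of_real W * (of_real (c - d * q) * P)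
          = of_real c * (of_real W * P) - of_real d * (of_real (q * W) * P)"
      for W q :: real and P :: complex
      by (simp add: algebra_simps)
    then show ?thesis unfolding affine .
  qed
  have "SN eps (\<lambda>x. of_real x * psi x) (Suc M) p
        = (\<Sum>\<nu>=0..Suc M. of_real c * (of_real (w \<nu>) * psi (snd p + hN eps (Suc M) \<nu>))
            - of_real d * (of_real (real \<nu> / real (Suc M) * w \<nu>) * psi (snd p + hN eps (Suc M) \<nu>)))"
    unfolding SN_eq_bernstein_sum w_def[symmetric] summand ..
  also have "\<dots> = of_real c * SN eps psi (Suc M) p
               - of_real d * (\<Sum>\<nu>=0..Suc M. of_real (real \<nu> / real (Suc M) * w \<nu>)
                                          * psi (snd p + hN eps (Suc M) \<nu>))"
    unfolding sum_subtractf sum_distrib_left SN_eq_bernstein_sum w_def ..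
  also have "\<dots> = of_real c * SN eps psi (Suc M) p
                   - of_real (d * ((1 - fst p) / 2)) * SN (eps_shift eps) psi M p"
    unfolding w_def SN_first_moment[OF assms] by (simp only: of_real_mult mult.assoc)
  finally show ?thesis by (simp add: c_def d_def)
qed

definition adm_family :: "(nat \<Rightarrow> real) set \<Rightarrow> bool" where
  "adm_family F \<longleftrightarrow> (\<forall>eps\<in>F. adm_seq eps) \<and> (\<forall>e>0. \<exists>N0. \<forall>N\<ge>N0. \<forall>eps\<in>F. eps N < e)"

lemma adm_family_iff:
  "adm_family F \<longleftrightarrow>
     (\<forall>eps\<in>F. \<forall>N. 0 \<le> eps N \<and> eps N < 1) \<and> uniform_limit F (\<lambda>N eps. eps N) (\<lambda>_. 0) sequentially"
proof
  assume F: "adm_family F"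
  then have "\<forall>eps\<in>F. \<forall>N. 0 \<le> eps N \<and> eps N < 1" by (simp add: adm_family_def adm_seq_def)
  with F show "(\<forall>eps\<in>F. \<forall>N. 0 \<le> eps N \<and> eps N < 1) \<and> uniform_limit F (\<lambda>N eps. eps N) (\<lambda>_. 0) sequentially"
    by (auto simp: adm_family_def uniform_limit_sequentially_iff dist_real_def)
next
  assume F: "(\<forall>eps\<in>F. \<forall>N. 0 \<le> eps N \<and> eps N < 1) \<and> uniform_limit F (\<lambda>N eps. eps N) (\<lambda>_. 0) sequentially"
  then have "\<forall>eps\<in>F. adm_seq eps" by (auto simp: adm_seq_def dest: tendsto_uniform_limitI)
  with F show "adm_family F"
    by (auto simp: adm_family_def uniform_limit_sequentially_iff dist_real_def)
qed

lemma adm_family_singleton: "adm_seq eps \<Longrightarrow> adm_family {eps}"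
  by (simp add: adm_family_iff adm_seq_def)

lemma eps_shift_bounds:
  assumes "0 \<le> eps (Suc M)" "eps (Suc M) < 1"
  shows "0 \<le> eps_shift eps M" "eps_shift eps M < 1"
    and "eps_shift eps M \<le> inverse (real (Suc M)) + eps (Suc M)"
proof -
  have "1 + real M * eps (Suc M) < real (Suc M)" if "M \<noteq> 0"
    using assms that by (simp add: mult_strict_left_mono)
  then show "0 \<le> eps_shift eps M" "eps_shift eps M < 1"
    using assms by (simp_all add: eps_shift_def divide_less_eq)
  have "real M * eps (Suc M) / real (Suc M) \<le> eps (Suc M)"
    using assms by (simp add: divide_le_eq algebra_simps)
  then show "eps_shift eps M \<le> inverse (real (Suc M)) + eps (Suc M)"
    using assms by (auto simp: eps_shift_def divide_inverse distrib_right)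
qed

lemma adm_family_eps_shift:
  assumes "adm_family F"
  shows "adm_family (eps_shift ` F)"
proof -
  have bounds: "\<forall>eps\<in>F. \<forall>N. 0 \<le> eps N \<and> eps N < 1"
    and lim: "uniform_limit F (\<lambda>N eps. eps N) (\<lambda>_. 0) sequentially"
    using assms by (auto simp: adm_family_iff)
  have "uniform_limit F (\<lambda>N eps. eps (Suc N)) (\<lambda>_. 0) sequentially"
    using lim by (simp add: uniform_limit_sequentially_Suc_iff[where f = "\<lambda>N eps. eps N"])
  then have "uniform_limit F (\<lambda>N eps. inverse (real (Suc N)) + eps (Suc N)) (\<lambda>_. 0 + 0) sequentially"
    by (intro uniform_limit_add uniform_limit_sequence_const LIMSEQ_inverse_real_of_nat)
  then have "uniform_limit F (\<lambda>N eps. eps_shift eps N) (\<lambda>_. 0) sequentially"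
    by (rule metric_uniform_limit_imp_uniform_limit)
       (use bounds eps_shift_bounds in \<open>auto intro!: always_eventually simp: dist_real_def\<close>)
  then have "uniform_limit (eps_shift ` F) (\<lambda>N eps. eps N) (\<lambda>_. 0) sequentially"
    by (simp add: uniform_limit_iff)
  then show ?thesis
    using bounds eps_shift_bounds by (auto simp: adm_family_iff)
qed

lemma adm_family_uniform_limit_Suc:
  assumes "adm_family F"
  shows "uniform_limit (F \<times> K) (\<lambda>M q. fst q (Suc M)) (\<lambda>_. 0) sequentially"
proof -
  have lim: "uniform_limit F (\<lambda>N eps. eps N) (\<lambda>_. 0) sequentially"
    using assms by (simp add: adm_family_iff)
  have "fst \<in> F \<times> K \<rightarrow> F" by auto
  from uniform_limit_compose'[OF lim this]
  have "uniform_limit (F \<times> K) (\<lambda>N q. fst q N) (\<lambda>_. 0) sequentially" by simp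
  then show ?thesis
    by (simp add: uniform_limit_sequentially_Suc_iff[where f = "\<lambda>N q. fst q N"])
qed

text \<open>Condition (2) of a regular supershift, with the family F and the compact set K merged
  into the single index set F \<times> K. Singleton families show that it implies condition (1).\<close>

definition uniform_supershift :: "real set \<Rightarrow> (real \<Rightarrow> complex) \<Rightarrow> bool" where
  "uniform_supershift A psi \<longleftrightarrow>
     (\<forall>F K. adm_family F \<and> compact K \<and> K \<subseteq> AA A \<longrightarrow>
        uniform_limit (F \<times> K) (\<lambda>N q. SN (fst q) psi N (snd q))
          (\<lambda>q. psi (fst (snd q) + snd (snd q))) sequentially)"

lemma regular_supershift_iff:
  "regular_supershift A psi \<longleftrightarrow> continuous_on A psi \<and> uniform_supershift A psi"
proof -
  have family_iff: "uniform_supershift A psi \<longleftrightarrow>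
     (\<forall>F. (\<forall>eps\<in>F. adm_seq eps) \<and> (\<forall>e>0. \<exists>N0. \<forall>N\<ge>N0. \<forall>eps\<in>F. eps N < e) \<longrightarrow>
        (\<forall>K. compact K \<and> K \<subseteq> AA A \<longrightarrow>
           (\<forall>e>0. \<exists>N0. \<forall>N\<ge>N0. \<forall>eps\<in>F. \<forall>p\<in>K.
               norm (SN eps psi N p - psi (fst p + snd p)) < e)))"
    by (auto simp: uniform_supershift_def adm_family_def uniform_limit_sequentially_iff dist_norm)
  have single: "\<forall>eps. adm_seq eps \<longrightarrow> (\<forall>K. compact K \<and> K \<subseteq> AA A \<longrightarrow>
           uniform_limit K (SN eps psi) (\<lambda>p. psi (fst p + snd p)) sequentially)"
    if "uniform_supershift A psi"
  proof (intro allI impI)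
    fix eps K assume "adm_seq eps" "compact K \<and> K \<subseteq> AA A"
    then have "uniform_limit ({eps} \<times> K) (\<lambda>N q. SN (fst q) psi N (snd q))
                 (\<lambda>q. psi (fst (snd q) + snd (snd q))) sequentially"
      using that adm_family_singleton by (simp add: uniform_supershift_def)
    from uniform_limit_compose'[OF this, of "Pair eps" K]
    show "uniform_limit K (SN eps psi) (\<lambda>p. psi (fst p + snd p)) sequentially" by simp
  qed
  show ?thesis
    unfolding regular_supershift_def family_iff[symmetric] using single by blast
qed

lemma SN_add: "SN eps (\<lambda>x. f x + g x) N p = SN eps f N p + SN eps g N p"
  by (simp add: SN_def distrib_left sum.distrib)

lemma SN_cmult: "SN eps (\<lambda>x. c * f x) N p = c * SN eps f N p"
  by (simp add: SN_def sum_distrib_left mult_ac)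

lemma uniform_supershift_add:
  "uniform_supershift A f \<Longrightarrow> uniform_supershift A g \<Longrightarrow> uniform_supershift A (\<lambda>x. f x + g x)"
  unfolding uniform_supershift_def SN_add by (simp add: uniform_limit_add)

lemma uniform_supershift_cmult:
  "uniform_supershift A f \<Longrightarrow> uniform_supershift A (\<lambda>x. c * f x)"
  unfolding uniform_supershift_def SN_cmult
  by (simp add: bounded_linear.uniform_limit[OF bounded_linear_mult_right])

lemma uniform_supershift_eps_shift:
  assumes "uniform_supershift A psi" "adm_family F" "compact K" "K \<subseteq> AA A"
  shows "uniform_limit (F \<times> K) (\<lambda>M q. SN (eps_shift (fst q)) psi M (snd q))
           (\<lambda>q. psi (fst (snd q) + snd (snd q))) sequentially"
proof -
  have lim: "uniform_limit (eps_shift ` F \<times> K) (\<lambda>N q. SN (fst q) psi N (snd q))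
               (\<lambda>q. psi (fst (snd q) + snd (snd q))) sequentially"
    using assms adm_family_eps_shift by (simp add: uniform_supershift_def)
  have "(\<lambda>q. (eps_shift (fst q), snd q)) \<in> F \<times> K \<rightarrow> eps_shift ` F \<times> K" by auto
  from uniform_limit_compose'[OF lim this] show ?thesis by simp
qed

lemma uniform_supershift_times_of_real:
  assumes cont: "continuous_on A psi" and psi: "uniform_supershift A psi"
  shows "uniform_supershift A (\<lambda>x. of_real x * psi x)"
  unfolding uniform_supershift_def
proof (intro allI impI)
  fix F K assume "adm_family F \<and> compact K \<and> K \<subseteq> AA A"
  then have F: "adm_family F" and K: "compact K" "K \<subseteq> AA A" by auto
  define S where "S = F \<times> K"
  define P :: "(nat \<Rightarrow> real) \<times> real \<times> real \<Rightarrow> complex"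
    where "P = (\<lambda>q. psi (fst (snd q) + snd (snd q)))"
  have lim_SN: "uniform_limit S (\<lambda>M q. SN (fst q) psi (Suc M) (snd q)) P sequentially"
    using psi F K unfolding uniform_supershift_def S_def P_def
    by (simp add: uniform_limit_sequentially_Suc_iff[where f = "\<lambda>N q. SN (fst q) psi N (snd q)"])
  have lim_SN_shift: "uniform_limit S (\<lambda>M q. SN (eps_shift (fst q)) psi M (snd q)) P sequentially"
    unfolding S_def P_def using psi F K by (rule uniform_supershift_eps_shift)
  have lim_eps: "uniform_limit S (\<lambda>M q. fst q (Suc M)) (\<lambda>_. 0) sequentially"
    unfolding S_def using F by (rule adm_family_uniform_limit_Suc)
  have bounded_on_K: "bounded ((\<lambda>q. f (snd q)) ` S)"
    if "continuous_on K f" for f :: "real \<times> real \<Rightarrow> 'a::real_normed_vector"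
    unfolding S_def using K(1) that by (rule bounded_image_snd)
  have "uniform_limit S (\<lambda>M q. snd (snd q) + 1 - 2 * fst q (Suc M))
          (\<lambda>q. snd (snd q) + 1 - 2 * 0) sequentially"
    by (intro uniform_limit_minus uniform_limit_const lim_eps
        bounded_linear.uniform_limit[OF bounded_linear_mult_right])
  then have lim_c: "uniform_limit S (\<lambda>M q. of_real (snd (snd q) + 1 - 2 * fst q (Suc M)) :: complex)
                      (\<lambda>q. of_real (snd (snd q) + 1)) sequentially"
    using bounded_linear.uniform_limit[OF bounded_linear_of_real] by fastforce
  have "uniform_limit S (\<lambda>M q. (1 - fst (snd q)) * (1 - fst q (Suc M)))
          (\<lambda>q. (1 - fst (snd q)) * (1 - 0)) sequentially"
    by (intro uniform_lim_mult uniform_limit_minus uniform_limit_const lim_eps bounded_on_K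
        continuous_intros)
  then have lim_d: "uniform_limit S (\<lambda>M q. of_real ((1 - fst (snd q)) * (1 - fst q (Suc M))) :: complex)
                      (\<lambda>q. of_real (1 - fst (snd q))) sequentially"
    using bounded_linear.uniform_limit[OF bounded_linear_of_real] by fastforce
  have "continuous_on K (\<lambda>p. psi (fst p + snd p))"
    using K(2) by (intro continuous_on_compose2[OF cont] continuous_intros) (auto simp: AA_def)
  then have bounded_P: "bounded (P ` S)"
    unfolding P_def by (rule bounded_on_K)
  have "uniform_limit S
          (\<lambda>M q. of_real (snd (snd q) + 1 - 2 * fst q (Suc M)) * SN (fst q) psi (Suc M) (snd q)
                 - of_real ((1 - fst (snd q)) * (1 - fst q (Suc M))) * SN (eps_shift (fst q)) psi M (snd q))
          (\<lambda>q. of_real (snd (snd q) + 1) * P q - of_real (1 - fst (snd q)) * P q) sequentially"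
    (is "uniform_limit S ?rhs ?lim sequentially")
    by (intro uniform_limit_minus uniform_lim_mult lim_c lim_d lim_SN lim_SN_shift bounded_P bounded_on_K
        continuous_intros)
  moreover have eventually_eq: "\<forall>\<^sub>F M in sequentially. \<forall>q\<in>S.
                   ?rhs M q = SN (fst q) (\<lambda>x. of_real x * psi x) (Suc M) (snd q)"
    using eventually_gt_at_top[of "0::nat"] by eventually_elim (simp add: SN_times_of_real)
  moreover have lim_eq: "?lim q = of_real (fst (snd q) + snd (snd q)) * P q" for q
    by (simp add: algebra_simps)
  ultimately have "uniform_limit S (\<lambda>M q. SN (fst q) (\<lambda>x. of_real x * psi x) (Suc M) (snd q))
                     (\<lambda>q. of_real (fst (snd q) + snd (snd q)) * P q) sequentially"
    by (subst (asm) uniform_limit_cong[OF eventually_eq lim_eq])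
  then show "uniform_limit (F \<times> K) (\<lambda>N q. SN (fst q) (\<lambda>x. of_real x * psi x) N (snd q))
               (\<lambda>q. of_real (fst (snd q) + snd (snd q)) * psi (fst (snd q) + snd (snd q))) sequentially"
    unfolding S_def P_def uniform_limit_sequentially_Suc_iff
      [where f = "\<lambda>N q. SN (fst q) (\<lambda>x. of_real x * psi x) N (snd q)"] .
qed

lemma regular_supershift_add:
  "regular_supershift A f \<Longrightarrow> regular_supershift A g \<Longrightarrow> regular_supershift A (\<lambda>x. f x + g x)"
  by (simp add: regular_supershift_iff continuous_on_add uniform_supershift_add)

lemma regular_supershift_cmult:
  "regular_supershift A f \<Longrightarrow> regular_supershift A (\<lambda>x. c * f x)"
  by (simp add: regular_supershift_iff continuous_on_mult_left uniform_supershift_cmult)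

lemma regular_supershift_times_of_real:
  "regular_supershift A psi \<Longrightarrow> regular_supershift A (\<lambda>x. of_real x * psi x)"
  by (simp add: regular_supershift_iff uniform_supershift_times_of_real continuous_intros)

lemma regular_supershift_poly_mult:
  assumes "regular_supershift A psi"
  shows "regular_supershift A (\<lambda>x. poly p (of_real x) * psi x)"
proof (induction p)
  case (pCons c p)
  have "regular_supershift A (\<lambda>x. c * psi x + of_real x * (poly p (of_real x) * psi x))"
    using assms pCons.IH
    by (intro regular_supershift_add regular_supershift_cmult regular_supershift_times_of_real)
  then show ?case by (simp add: algebra_simps)
qed (use regular_supershift_cmult[OF assms, of 0] in simp)

theorem mainTheorem7:
  fixes A :: "real set" and psi :: "real \<Rightarrow> complex"
  assumes "\<exists>l r :: ereal. l < r \<and> r - l > 2 \<and> A = {x. l < ereal x \<and> ereal x < r}"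
    and "regular_supershift A psi"
  shows "regular_supershift A (\<lambda>a. complex_of_real a * psi a) \<and>
         (\<forall>p :: complex poly. regular_supershift A (\<lambda>a. poly p (complex_of_real a) * psi a))"
  using regular_supershift_times_of_real[OF assms(2)] regular_supershift_poly_mult[OF assms(2)]
  by blast

end
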